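(* For every integer $n>1$, let $A=1_{n\times n}$ (the all-ones $n\times n$ matrix) and $B=1_{n\times 1}$. Then $(A,B)$ is uncontrollable (indeed its controllability matrix has rank $1$) and its zero-norm distance to controllability equals $r_c(A,B)=n-1$.
   Context: $r_c(A,B)=\min\{\|[\Delta A,\Delta B]\|_0: \Delta A\in\mathbb{R}^{n\times n},\Delta B\in\mathbb{R}^{n\times m},(A+\Delta A,B+\Delta B)\text{ controllable}\}$, where $\|M\|_0$ is the number of nonzero entries of $M$, and controllability means $\operatorname{rank}[B,AB,\dots,A^{n-1}B]=n$. *)

theory Defs
  imports "HOL-Analysis.Analysis"
begin

(* Matrix power w.r.t. matrix multiplication (note: (^) on real^'n^'n is componentwise). *)
fun matpow :: "real^'n^'n \<Rightarrow> nat \<Rightarrow> real^'n^'n" where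
  "matpow A 0 = mat 1"
| "matpow A (Suc k) = A ** matpow A k"

definition ctrb_columns :: "real^'n^'n \<Rightarrow> real^'m^'n \<Rightarrow> (real^'n) set" where
  "ctrb_columns A B = (\<Union>k<CARD('n). columns (matpow A k ** B))"

definition ctrb_rank :: "real^'n^'n \<Rightarrow> real^'m^'n \<Rightarrow> nat" where
  "ctrb_rank A B = dim (span (ctrb_columns A B))"

definition controllable :: "real^'n^'n \<Rightarrow> real^'m^'n \<Rightarrow> bool" where
  "controllable A B \<longleftrightarrow> ctrb_rank A B = CARD('n)"

definition nnz :: "real^'c^'r \<Rightarrow> nat" where
  "nnz M = card {(i, j). M $ i $ j \<noteq> 0}"

(* ||[dA, dB]||_0 = nnz dA + nnz dB *)
definition dist_ctrb :: "real^'n^'n \<Rightarrow> real^'m^'n \<Rightarrow> nat" where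
  "dist_ctrb A B = (LEAST k. \<exists>dA dB. nnz dA + nnz dB = k \<and> controllable (A + dA) (B + dB))"

end

theory Submission
  imports Defs "HOL-Computational_Algebra.Polynomial"
begin

(* All rows of [A, B] coincide, and two equal rows of [A, B] give two equal rows of the
   controllability matrix.  A perturbation with fewer than n - 1 nonzero entries leaves two
   rows of [A, B] untouched, so the perturbed pair is still uncontrollable.  Conversely,
   adding diag(d) with distinct entries, exactly one of them zero, costs n - 1 entries:
   since A x is always a multiple of the input vector B = 1, the matrix A acts as a state
   feedback, so (A + diag d, 1) has the same Krylov spaces as (diag d, 1), and these are
   spanned by the Vandermonde vectors (d_i^k), i.e. they are everything. *)

definition krylov :: "real^'n^'n \<Rightarrow> real^'n \<Rightarrow> nat \<Rightarrow> (real^'n) set" where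
  "krylov A b m = (\<lambda>k. matpow A k *v b) ` {..<m}"

lemma ctrb_columns_single_input:
  fixes A :: "real^'n^'n" and B :: "real^1^'n"
  shows "ctrb_columns A B = krylov A (column 1 B) CARD('n)"
proof -
  have "columns (matpow A k ** B) = {matpow A k *v column 1 B}" for k
    by (auto simp: columns_def column_def matrix_matrix_mult_def matrix_vector_mult_def
        vec_eq_iff num1_eq1)
  then show ?thesis
    unfolding ctrb_columns_def krylov_def by auto
qed

lemma controllable_iff_span_ctrb_columns:
  "controllable A B \<longleftrightarrow> span (ctrb_columns A B) = UNIV"
  unfolding controllable_def ctrb_rank_def dim_span
  by (metis DIM_cart DIM_real dim_eq_full nat_mult_1_right)

lemma controllable_iff_span_krylov:
  fixes A :: "real^'n^'n" and B :: "real^1^'n"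
  shows "controllable A B \<longleftrightarrow> span (krylov A (column 1 B) CARD('n)) = UNIV"
  by (simp add: controllable_iff_span_ctrb_columns ctrb_columns_single_input)

lemma matpow_mult_rows_eq:
  fixes A :: "real^'n^'n" and B :: "real^'m^'n"
  assumes "A $ i = A $ j" "B $ i = B $ j"
  shows "(matpow A k ** B) $ i = (matpow A k ** B) $ j"
proof (cases k)
  case 0
  then show ?thesis using assms(2) by (simp add: matrix_mul_lid)
next
  case (Suc k')
  then have "matpow A k ** B = A ** (matpow A k' ** B)"
    by (simp add: matrix_mul_assoc)
  then show ?thesis
    using assms(1) by (simp add: matrix_matrix_mult_def vec_eq_iff)
qed

lemma not_controllable_if_rows_eq:
  fixes A :: "real^'n^'n" and B :: "real^'m^'n"
  assumes "i \<noteq> j" "A $ i = A $ j" "B $ i = B $ j"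
  shows "\<not> controllable A B"
proof
  assume "controllable A B"
  then have "span (ctrb_columns A B) = UNIV"
    by (simp add: controllable_iff_span_ctrb_columns)
  moreover have "ctrb_columns A B \<subseteq> {x. x $ i = x $ j}"
    using matpow_mult_rows_eq[OF assms(2,3)]
    by (auto simp: ctrb_columns_def columns_def column_def)
  then have "span (ctrb_columns A B) \<subseteq> {x. x $ i = x $ j}"
    by (rule span_minimal) (auto simp: subspace_def)
  moreover have "axis i 1 \<notin> {x :: real^'n. x $ i = x $ j}"
    using assms(1) by (simp add: axis_def)
  ultimately show False by blast
qed

lemma card_nonzero_rows_le_nnz:
  fixes M :: "real^'c^'r"
  shows "card {i. M $ i \<noteq> 0} \<le> nnz M"
proof -
  have "{i. M $ i \<noteq> 0} = fst ` {(i, j). M $ i $ j \<noteq> 0}"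
    by (force simp: vec_eq_iff)
  then show ?thesis
    unfolding nnz_def by (simp add: card_image_le)
qed

lemma nnz_ge_if_controllable_perturbation:
  fixes A dA :: "real^'n^'n" and B dB :: "real^'m^'n"
  assumes "\<And>i j. A $ i = A $ j" "\<And>i j. B $ i = B $ j"
    and "controllable (A + dA) (B + dB)"
  shows "CARD('n) - 1 \<le> nnz dA + nnz dB"
proof (rule ccontr)
  assume "\<not> ?thesis"
  define touched where "touched = {i. dA $ i \<noteq> 0} \<union> {i. dB $ i \<noteq> 0}"
  have "card touched \<le> nnz dA + nnz dB"
    unfolding touched_def
    using card_Un_le card_nonzero_rows_le_nnz[of dA] card_nonzero_rows_le_nnz[of dB]
    by (meson add_mono order_trans)
  with \<open>\<not> ?thesis\<close> have "2 \<le> card (UNIV - touched)"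
    by (simp add: card_Diff_subset)
  then obtain i j where "i \<notin> touched" "j \<notin> touched" "i \<noteq> j"
    by (auto simp: numeral_2_eq_2 card_le_Suc_iff)
  then have "(A + dA) $ i = (A + dA) $ j" "(B + dB) $ i = (B + dB) $ j"
    using assms(1,2) by (auto simp: touched_def vec_eq_iff)
  with \<open>i \<noteq> j\<close> assms(3) show False
    using not_controllable_if_rows_eq by blast
qed

lemma matpow_mult_eigenvector:
  assumes "A *v b = c *\<^sub>R b"
  shows "matpow A k *v b = (c ^ k) *\<^sub>R b"
proof (induction k)
  case 0
  then show ?case by simp
next
  case (Suc k)
  have "matpow A (Suc k) *v b = A *v (matpow A k *v b)"
    by (simp add: matrix_vector_mul_assoc)
  also have "\<dots> = (c ^ Suc k) *\<^sub>R b"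
    by (simp add: Suc assms matrix_vector_mult_scaleR)
  finally show ?case .
qed

lemma ctrb_rank_eigenvector:
  fixes A :: "real^'n^'n" and B :: "real^1^'n"
  assumes "A *v column 1 B = c *\<^sub>R column 1 B" "column 1 B \<noteq> 0"
  shows "ctrb_rank A B = 1"
proof -
  let ?b = "column 1 B"
  have columns: "ctrb_columns A B = (\<lambda>k. (c ^ k) *\<^sub>R ?b) ` {..<CARD('n)}"
    by (simp add: ctrb_columns_single_input krylov_def matpow_mult_eigenvector[OF assms(1)])
  have "span (ctrb_columns A B) = span {?b}"
  proof (subst span_eq, intro conjI)
    show "ctrb_columns A B \<subseteq> span {?b}"
      unfolding columns by (auto intro: span_mul span_base)
    have "?b \<in> ctrb_columns A B"
      unfolding columns by (rule image_eqI[of _ _ 0]) auto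
    then show "{?b} \<subseteq> span (ctrb_columns A B)"
      by (simp add: span_base)
  qed
  then show ?thesis
    unfolding ctrb_rank_def using assms(2) by (simp add: dim_span)
qed

(* The hypothesis says that M = N + b k^T for a linear functional k, i.e. M arises from N
   by state feedback through the input vector b. *)

lemma span_krylov_feedback_subset:
  assumes "\<And>x. M *v x - N *v x \<in> span {b}"
  shows "span (krylov M b m) \<subseteq> span (krylov N b m)"
proof -
  have "matpow M k *v b \<in> span (krylov N b (Suc k))" for k
  proof (induction k)
    case 0
    then show ?case by (simp add: krylov_def span_base)
  next
    case (Suc k)
    let ?x = "matpow M k *v b"
    have "N *v ?x \<in> (*v) N ` span (krylov N b (Suc k))"
      using Suc by blast
    also have "\<dots> = span ((*v) N ` krylov N b (Suc k))"
      by (simp add: span_linear_image matrix_vector_mul_linear)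
    also have "\<dots> \<subseteq> span (krylov N b (Suc (Suc k)))"
    proof (rule span_mono, rule image_subsetI)
      fix y assume "y \<in> krylov N b (Suc k)"
      then obtain j where "j < Suc k" "y = matpow N j *v b"
        by (auto simp: krylov_def)
      then show "N *v y \<in> krylov N b (Suc (Suc k))"
        unfolding krylov_def
        by (auto simp: matrix_vector_mul_assoc intro: image_eqI[of _ _ "Suc j"])
    qed
    finally have "N *v ?x \<in> span (krylov N b (Suc (Suc k)))" .
    moreover have "span {b} \<subseteq> span (krylov N b (Suc (Suc k)))"
      by (rule span_mono) (force simp: krylov_def)
    then have "M *v ?x - N *v ?x \<in> span (krylov N b (Suc (Suc k)))"
      using assms by blast
    ultimately have "N *v ?x + (M *v ?x - N *v ?x) \<in> span (krylov N b (Suc (Suc k)))"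
      by (rule span_add)
    then show ?case
      by (simp add: matrix_vector_mul_assoc)
  qed
  then have "krylov M b m \<subseteq> span (krylov N b m)"
    by (force simp: krylov_def intro: span_mono[THEN subsetD, rotated])
  then show ?thesis
    by (rule span_minimal) simp
qed

lemma controllable_feedback:
  fixes M N :: "real^'n^'n" and B :: "real^1^'n"
  assumes "\<And>x. M *v x - N *v x \<in> span {column 1 B}" "controllable N B"
  shows "controllable M B"
proof -
  have "N *v x - M *v x \<in> span {column 1 B}" for x
    using span_neg[OF assms(1)[of x]] by simp
  then show ?thesis
    using assms(2) span_krylov_feedback_subset[of N M "column 1 B" "CARD('n)"]
    by (auto simp: controllable_iff_span_krylov)
qed

definition diag_mat :: "('n \<Rightarrow> real) \<Rightarrow> real^'n^'n" where
  "diag_mat d = (\<chi> i j. if i = j then d i else 0)"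

lemma diag_mat_mult_vector: "diag_mat d *v x = (\<chi> i. d i * x $ i)"
proof -
  have "(\<Sum>j\<in>UNIV. (if i = j then d i else 0) * x $ j) = d i * x $ i" for i
    by (simp add: if_distrib[of "\<lambda>c. c * _"] cong: if_cong)
  then show ?thesis
    by (simp add: diag_mat_def matrix_vector_mult_def)
qed

lemma nnz_diag_mat: "nnz (diag_mat d) = card {i. d i \<noteq> 0}"
proof -
  have "{(i, j). diag_mat d $ i $ j \<noteq> 0} = (\<lambda>i. (i, i)) ` {i. d i \<noteq> 0}"
    by (auto simp: diag_mat_def)
  then show ?thesis
    unfolding nnz_def by (simp add: card_image inj_on_def)
qed

lemma poly_vec_in_span_powers:
  fixes d :: "'n::finite \<Rightarrow> real"
  assumes "degree p < m"
  shows "(\<chi> i. poly p (d i)) \<in> span ((\<lambda>k. \<chi> i. d i ^ k) ` {..<m})"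
proof -
  have "(\<chi> i. poly p (d i)) = (\<Sum>k\<le>degree p. coeff p k *\<^sub>R (\<chi> i. d i ^ k))"
    by (simp add: vec_eq_iff poly_altdef sum_component)
  also have "\<dots> \<in> span ((\<lambda>k. \<chi> i. d i ^ k) ` {..<m})"
    using assms by (intro span_sum span_mul span_base) auto
  finally show ?thesis .
qed

(* Each basis vector is the vector of values of a Lagrange polynomial at the distinct
   nodes d i. *)

lemma span_vandermonde_eq_UNIV:
  fixes d :: "'n::finite \<Rightarrow> real"
  assumes "inj d"
  shows "span ((\<lambda>k. \<chi> i. d i ^ k) ` {..<CARD('n)}) = UNIV"
proof -
  have "axis i 1 \<in> span ((\<lambda>k. \<chi> i. d i ^ k) ` {..<CARD('n)})" for i
  proof -
    define p :: "real poly" where "p = (\<Prod>j\<in>UNIV - {i}. [:- d j, 1:])"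
    have "degree p = CARD('n) - 1"
      unfolding p_def by (simp add: degree_prod_eq_sum_degree card_Diff_subset)
    then have "degree p < CARD('n)"
      by simp
    have poly_p: "poly p x = (\<Prod>j\<in>UNIV - {i}. x - d j)" for x
      unfolding p_def by (simp add: poly_prod)
    have "poly p (d i) \<noteq> 0"
      using assms by (auto simp: poly_p inj_eq)
    then have "axis i 1 = inverse (poly p (d i)) *\<^sub>R (\<chi> m. poly p (d m))"
      by (auto simp: vec_eq_iff axis_def poly_p)
    then show ?thesis
      using span_mul[OF poly_vec_in_span_powers[OF \<open>degree p < CARD('n)\<close>]] by metis
  qed
  then have "Basis \<subseteq> span ((\<lambda>k. \<chi> i. d i ^ k) ` {..<CARD('n)})"
    by (auto simp: Basis_vec_def)
  then show ?thesis
    using span_minimal[OF _ subspace_span] span_Basis by blast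
qed

lemma controllable_diag_mat_ones:
  fixes d :: "'n::finite \<Rightarrow> real"
  assumes "inj d"
  shows "controllable (diag_mat d) (\<chi> i j. 1 :: real^1^'n)"
proof -
  have "matpow (diag_mat d) k *v (\<chi> i. 1) = (\<chi> i. d i ^ k)" for k
    by (induction k) (simp_all add: diag_mat_mult_vector matrix_vector_mul_assoc[symmetric])
  then have "krylov (diag_mat d) (\<chi> i. 1) m = (\<lambda>k. \<chi> i. d i ^ k) ` {..<m}" for m
    by (simp add: krylov_def)
  then show ?thesis
    using span_vandermonde_eq_UNIV[OF assms]
    by (simp add: controllable_iff_span_krylov column_def)
qed

lemma ones_mult_vector: "(\<chi> i j. 1 :: real^'n^'m) *v x = (\<Sum>j\<in>UNIV. x $ j) *\<^sub>R (\<chi> i. 1)"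
  by (simp add: matrix_vector_mult_def vec_eq_iff)

lemma controllable_ones_plus_diag_mat:
  fixes d :: "'n::finite \<Rightarrow> real"
  assumes "inj d"
  shows "controllable ((\<chi> i j. 1) + diag_mat d) (\<chi> i j. 1 :: real^1^'n)"
proof (rule controllable_feedback[OF _ controllable_diag_mat_ones[OF assms]])
  show "((\<chi> i j. 1) + diag_mat d) *v x - diag_mat d *v x
      \<in> span {column 1 (\<chi> i j. 1 :: real^1^'n)}" for x :: "real^'n"
    by (simp add: matrix_vector_mult_add_rdistrib ones_mult_vector column_def span_mul span_base)
qed

lemma ex_inj_real_with_single_zero:
  "\<exists>d :: 'n::finite \<Rightarrow> real. inj d \<and> card {i. d i \<noteq> 0} = CARD('n) - 1"
proof -
  obtain f :: "'n \<Rightarrow> nat" where f: "bij_betw f UNIV {..<CARD('n)}"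
    using ex_bij_betw_finite_nat[of "UNIV :: 'n set"] by (auto simp: lessThan_atLeast0)
  then obtain i0 where "f i0 = 0"
    by (metis bij_betw_imp_surj_on lessThan_iff rangeE zero_less_card_finite)
  with f have "f i = 0 \<longleftrightarrow> i = i0" for i
    by (metis bij_betw_imp_inj_on inj_eq)
  then have "{i. real (f i) \<noteq> 0} = UNIV - {i0}"
    by auto
  moreover have "inj (\<lambda>i. real (f i))"
    using f by (auto simp: bij_betw_def inj_def)
  ultimately show ?thesis
    by (intro exI[of _ "\<lambda>i. real (f i)"]) (simp add: card_Diff_subset)
qed

lemma dist_ctrb_eqI:
  assumes "controllable (A + dA) (B + dB)" "nnz dA + nnz dB = k"
    and "\<And>dA dB. controllable (A + dA) (B + dB) \<Longrightarrow> k \<le> nnz dA + nnz dB"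
  shows "dist_ctrb A B = k"
  unfolding dist_ctrb_def using assms by (intro Least_equality) blast+

theorem mainTheorem6:
  fixes A :: "real^'n^'n" and B :: "real^1^'n"
  assumes "CARD('n) > 1"
    and "A = (\<chi> i j. 1)"
    and "B = (\<chi> i j. 1)"
  shows "\<not> controllable A B \<and> ctrb_rank A B = 1 \<and> dist_ctrb A B = CARD('n) - 1"
proof -
  have ones: "column 1 B = (\<chi> i. 1)"
    by (simp add: assms(3) column_def)
  have "A *v column 1 B = real CARD('n) *\<^sub>R column 1 B" "column 1 B \<noteq> 0"
    unfolding ones assms(2) ones_mult_vector by (simp_all add: vec_eq_iff)
  then have rank: "ctrb_rank A B = 1"
    by (rule ctrb_rank_eigenvector)
  have lower: "CARD('n) - 1 \<le> nnz dA + nnz dB" if "controllable (A + dA) (B + dB)" for dA dB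
    using nnz_ge_if_controllable_perturbation[OF _ _ that] assms(2,3) by simp
  obtain d :: "'n \<Rightarrow> real" where "inj d" "card {i. d i \<noteq> 0} = CARD('n) - 1"
    using ex_inj_real_with_single_zero by blast
  moreover have "nnz (0 :: real^1^'n) = 0"
    by (simp add: nnz_def)
  ultimately have "dist_ctrb A B = CARD('n) - 1"
    using controllable_ones_plus_diag_mat assms(2,3) lower
    by (intro dist_ctrb_eqI[of A "diag_mat d" B 0]) (simp_all add: nnz_diag_mat)
  with rank assms(1) show ?thesis
    by (simp add: controllable_def)
qed

end
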